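(* There is a computable equivalence structure that is computably categorical but not computably bi-embeddably categorical.
   Context: An equivalence structure $\mathcal{A}=(A,E)$ has universe $A\subseteq\omega$ and an equivalence relation $E$ on $A$; it is computable if its atomic diagram is computable. Two structures are bi-embeddable if each embeds into the other. A computable structure $\mathcal{A}$ is computably bi-embeddably categorical if every computable structure bi-embeddable with $\mathcal{A}$ is bi-embeddable with $\mathcal{A}$ via computable embeddings in both directions. A computable structure $\mathcal{A}$ is computably categorical if for every computable structure $\mathcal{B}$ isomorphic to $\mathcal{A}$ there is a computable isomorphism from $\mathcal{B}$ to $\mathcal{A}$. *)

theory Defs
  imports Main
begin

datatype recf =
    Z
  | S
  | Proj nat
  | Comp recf "recf list"
  | Prim recf recf
  | Mn recf

inductive eval :: "recf \<Rightarrow> nat list \<Rightarrow> nat \<Rightarrow> bool" where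
  eval_Z: "eval Z xs 0"
| eval_S: "eval S (x # xs) (Suc x)"
| eval_Proj: "i < length xs \<Longrightarrow> eval (Proj i) xs (xs ! i)"
| eval_Comp: "list_all2 (\<lambda>g y. eval g xs y) gs ys \<Longrightarrow> eval f ys z \<Longrightarrow> eval (Comp f gs) xs z"
| eval_Prim0: "eval f xs y \<Longrightarrow> eval (Prim f g) (0 # xs) y"
| eval_PrimS: "eval (Prim f g) (n # xs) y \<Longrightarrow> eval g (n # y # xs) z
      \<Longrightarrow> eval (Prim f g) (Suc n # xs) z"
| eval_Mn: "eval f (n # xs) 0 \<Longrightarrow> (\<forall>m<n. \<exists>y. eval f (m # xs) (Suc y))
      \<Longrightarrow> eval (Mn f) xs n"

definition computable_fun :: "(nat \<Rightarrow> nat) \<Rightarrow> bool" where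
  "computable_fun f \<longleftrightarrow> (\<exists>p. \<forall>x. eval p [x] (f x))"

definition computable_set :: "nat set \<Rightarrow> bool" where
  "computable_set A \<longleftrightarrow> (\<exists>p. \<forall>x. eval p [x] (if x \<in> A then 1 else 0))"

definition computable_rel :: "nat rel \<Rightarrow> bool" where
  "computable_rel R \<longleftrightarrow> (\<exists>p. \<forall>x y. eval p [x, y] (if (x, y) \<in> R then 1 else 0))"

type_synonym eqstr = "nat set \<times> nat rel"

definition eq_structure :: "eqstr \<Rightarrow> bool" where
  "eq_structure \<A> \<longleftrightarrow> equiv (fst \<A>) (snd \<A>)"

text \<open>Computable: the atomic diagram is computable, i.e. universe and relation decidable.\<close>
definition computable_eqs :: "eqstr \<Rightarrow> bool" where
  "computable_eqs \<A> \<longleftrightarrow> eq_structure \<A> \<and> computable_set (fst \<A>) \<and> computable_rel (snd \<A>)"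

definition embedding :: "(nat \<Rightarrow> nat) \<Rightarrow> eqstr \<Rightarrow> eqstr \<Rightarrow> bool" where
  "embedding f \<A> \<B> \<longleftrightarrow> f ` fst \<A> \<subseteq> fst \<B> \<and> inj_on f (fst \<A>) \<and>
     (\<forall>x\<in>fst \<A>. \<forall>y\<in>fst \<A>. (x, y) \<in> snd \<A> \<longleftrightarrow> (f x, f y) \<in> snd \<B>)"

definition isomorphism :: "(nat \<Rightarrow> nat) \<Rightarrow> eqstr \<Rightarrow> eqstr \<Rightarrow> bool" where
  "isomorphism f \<A> \<B> \<longleftrightarrow> bij_betw f (fst \<A>) (fst \<B>) \<and>
     (\<forall>x\<in>fst \<A>. \<forall>y\<in>fst \<A>. (x, y) \<in> snd \<A> \<longleftrightarrow> (f x, f y) \<in> snd \<B>)"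

definition isomorphic :: "eqstr \<Rightarrow> eqstr \<Rightarrow> bool" where
  "isomorphic \<A> \<B> \<longleftrightarrow> (\<exists>f. isomorphism f \<A> \<B>)"

definition bi_embeddable :: "eqstr \<Rightarrow> eqstr \<Rightarrow> bool" where
  "bi_embeddable \<A> \<B> \<longleftrightarrow> (\<exists>f. embedding f \<A> \<B>) \<and> (\<exists>g. embedding g \<B> \<A>)"

definition computably_categorical :: "eqstr \<Rightarrow> bool" where
  "computably_categorical \<A> \<longleftrightarrow>
     (\<forall>\<B>. computable_eqs \<B> \<and> isomorphic \<B> \<A> \<longrightarrow>
        (\<exists>f. computable_fun f \<and> isomorphism f \<B> \<A>))"

definition computably_bi_embeddably_categorical :: "eqstr \<Rightarrow> bool" where
  "computably_bi_embeddably_categorical \<A> \<longleftrightarrow>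
     (\<forall>\<B>. computable_eqs \<B> \<and> bi_embeddable \<B> \<A> \<longrightarrow>
        (\<exists>f g. computable_fun f \<and> embedding f \<B> \<A> \<and> computable_fun g \<and> embedding g \<A> \<B>))"

end

(* The structure omega_eqs with infinitely many infinite classes is computably categorical:
   a computable copy is mapped onto it by sending an element to the pair formed by the rank of
   the least element of its class among all least elements and its rank within its class, both
   bounded counts over decidable sets.

   Against computable bi-embeddable categoricity we build a computable structure diag_eqs whose
   class n gains the element npair n s at every stage s until the class is killed. Once the
   program e has been seen to halt on representatives of the first 2e + 1 classes of
   omega_eqs, it kills the first class with index at least 2e among their images. Each program
   kills at most one class, and only one with index at least 2e, so infinitely many classes
   survive and stay infinite and diag_eqs is bi-embeddable with omega_eqs. An embedding computed
   by the program e, however, maps the images into distinct classes and so kills the image of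
   an infinite class, which is thereby finite.

   Termination is made decidable up to a bound: eval_within e x t y asks for a code below t of
   a finite set of evaluation judgements that contains the judgement that program e maps x to y
   and is closed under the rules of eval. Such sets contain only true judgements, and every
   terminating evaluation lies in one. *)

theory Submission
  imports Defs "HOL-Library.Nat_Bijection" "HOL-Library.Infinite_Set"
begin

section \<open>Computable functions of several arguments\<close>

definition recfn :: "nat \<Rightarrow> (nat list \<Rightarrow> nat) \<Rightarrow> bool" where
  "recfn k f \<longleftrightarrow> (\<exists>p. \<forall>xs. length xs = k \<longrightarrow> eval p xs (f xs))"

lemma length_Suc_0_iff: "length xs = Suc 0 \<longleftrightarrow> (\<exists>a. xs = [a])"
  by (cases xs) auto

lemma length_2_iff: "length xs = 2 \<longleftrightarrow> (\<exists>a b. xs = [a, b])"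
  by (cases xs; cases "tl xs") auto

lemma recfn_cong: "recfn k f \<Longrightarrow> (\<And>xs. length xs = k \<Longrightarrow> f xs = g xs) \<Longrightarrow> recfn k g"
  unfolding recfn_def by metis

lemma recfn_const: "recfn k (\<lambda>xs. c)"
proof -
  have "eval (((\<lambda>p. Comp S [p]) ^^ c) Z) xs c" for xs
  proof (induction c)
    case 0
    show ?case by (simp add: eval_Z)
  next
    case (Suc c)
    have "eval S [c] (Suc c)" by (rule eval_S)
    with Suc show ?case by (auto intro: eval_Comp[where ys = "[c]"])
  qed
  then show ?thesis unfolding recfn_def by blast
qed

lemma recfn_proj: "i < k \<Longrightarrow> recfn k (\<lambda>xs. xs ! i)"
  unfolding recfn_def by (metis eval_Proj)

lemma recfn_comp:
  assumes "recfn (length gs) f" and "\<forall>g\<in>set gs. recfn k g"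
  shows "recfn k (\<lambda>xs. f (map (\<lambda>g. g xs) gs))"
proof -
  have "\<exists>ps. list_all2 (\<lambda>p g. \<forall>xs. length xs = k \<longrightarrow> eval p xs (g xs)) ps gs"
    using assms(2) unfolding recfn_def
    by (induction gs) (auto simp: list_all2_Cons2)
  then obtain ps where ps: "list_all2 (\<lambda>p g. \<forall>xs. length xs = k \<longrightarrow> eval p xs (g xs)) ps gs" ..
  obtain pf where pf: "\<forall>ys. length ys = length gs \<longrightarrow> eval pf ys (f ys)"
    using assms(1) unfolding recfn_def by auto
  have "eval (Comp pf ps) xs (f (map (\<lambda>g. g xs) gs))" if "length xs = k" for xs
  proof (rule eval_Comp)
    show "list_all2 (\<lambda>g y. eval g xs y) ps (map (\<lambda>g. g xs) gs)"
      using ps that by (auto simp: list_all2_conv_all_nth)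
  qed (use pf in simp)
  then show ?thesis unfolding recfn_def by blast
qed

lemma recfn_prim:
  assumes "recfn k f" and "recfn (Suc (Suc k)) g"
  shows "recfn (Suc k) (\<lambda>xs. rec_nat (f (tl xs)) (\<lambda>n r. g (n # r # tl xs)) (hd xs))"
proof -
  obtain pf where pf: "\<forall>ys. length ys = k \<longrightarrow> eval pf ys (f ys)"
    using assms(1) unfolding recfn_def by auto
  obtain pg where pg: "\<forall>ys. length ys = Suc (Suc k) \<longrightarrow> eval pg ys (g ys)"
    using assms(2) unfolding recfn_def by auto
  have "eval (Prim pf pg) (n # ys) (rec_nat (f ys) (\<lambda>n r. g (n # r # ys)) n)" if "length ys = k" for n ys
    by (induction n) (use pf pg that in \<open>auto intro: eval_Prim0 eval_PrimS\<close>)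
  then have "eval (Prim pf pg) xs (rec_nat (f (tl xs)) (\<lambda>n r. g (n # r # tl xs)) (hd xs))"
    if "length xs = Suc k" for xs
    using that by (cases xs) auto
  then show ?thesis unfolding recfn_def by blast
qed

lemma recfn_op1: "recfn 1 (\<lambda>xs. h (xs ! 0)) \<Longrightarrow> recfn k a \<Longrightarrow> recfn k (\<lambda>xs. h (a xs))"
  using recfn_comp[of "[a]" "\<lambda>xs. h (xs ! 0)" k] by simp

lemma recfn_op2:
  "recfn 2 (\<lambda>xs. h (xs ! 0) (xs ! 1)) \<Longrightarrow> recfn k a \<Longrightarrow> recfn k b \<Longrightarrow> recfn k (\<lambda>xs. h (a xs) (b xs))"
  using recfn_comp[of "[a, b]" "\<lambda>xs. h (xs ! 0) (xs ! 1)" k] by (simp add: numeral_2_eq_2)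

lemma recfn_Suc:
  assumes "recfn k a"
  shows "recfn k (\<lambda>xs. Suc (a xs))"
proof -
  have "recfn 1 (\<lambda>xs. Suc (xs ! 0))"
    unfolding recfn_def by (metis One_nat_def eval_S length_Suc_0_iff nth_Cons_0)
  then show ?thesis using assms by (rule recfn_op1)
qed

lemma recfn_add:
  assumes "recfn k a" and "recfn k b"
  shows "recfn k (\<lambda>xs. a xs + b xs)"
proof -
  have eq: "rec_nat b (\<lambda>n r. Suc r) a = a + b" for a b :: nat by (induction a) auto
  have "recfn 2 (\<lambda>xs. rec_nat (tl xs ! 0) (\<lambda>n r. Suc r) (hd xs))"
    using recfn_prim[of 1 "\<lambda>ys. ys ! 0" "\<lambda>zs. Suc (zs ! 1)"] recfn_proj[of 0 1] recfn_Suc[OF recfn_proj[of 1 3]]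
    by (simp add: numeral_2_eq_2 numeral_3_eq_3)
  then have "recfn 2 (\<lambda>xs. xs ! 0 + xs ! 1)" by (rule recfn_cong) (auto simp: length_2_iff eq[simplified])
  then show ?thesis using assms by (rule recfn_op2)
qed

lemma recfn_pred:
  assumes "recfn k a"
  shows "recfn k (\<lambda>xs. a xs - 1)"
proof -
  have eq: "rec_nat 0 (\<lambda>n r. n) a = a - 1" for a :: nat by (cases a) auto
  have "recfn 1 (\<lambda>xs. rec_nat 0 (\<lambda>n r. n) (hd xs))"
    using recfn_prim[of 0 "\<lambda>ys. 0" "\<lambda>zs. zs ! 0"] recfn_const[of 0 0] recfn_proj[of 0 2]
    by (simp add: numeral_2_eq_2)
  then have "recfn 1 (\<lambda>xs. xs ! 0 - 1)" by (rule recfn_cong) (auto simp: length_Suc_0_iff eq)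
  then show ?thesis using assms by (rule recfn_op1)
qed

lemma recfn_diff:
  assumes "recfn k a" and "recfn k b"
  shows "recfn k (\<lambda>xs. a xs - b xs)"
proof -
  have eq: "rec_nat b (\<lambda>n r. r - 1) a = b - a" for a b :: nat by (induction a) auto
  have "recfn 2 (\<lambda>xs. rec_nat (tl xs ! 0) (\<lambda>n r. r - 1) (hd xs))"
    using recfn_prim[of 1 "\<lambda>ys. ys ! 0" "\<lambda>zs. zs ! 1 - 1"] recfn_proj[of 0 1] recfn_pred[OF recfn_proj[of 1 3]]
    by (simp add: numeral_2_eq_2 numeral_3_eq_3)
  then have "recfn 2 (\<lambda>xs. xs ! 1 - xs ! 0)" by (rule recfn_cong) (auto simp: length_2_iff eq[simplified])
  from recfn_op2[OF this recfn_proj[of 1 2] recfn_proj[of 0 2]]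
  have "recfn 2 (\<lambda>xs. xs ! 0 - xs ! 1)" by simp
  then show ?thesis using assms by (rule recfn_op2)
qed

lemma recfn_mult:
  assumes "recfn k a" and "recfn k b"
  shows "recfn k (\<lambda>xs. a xs * b xs)"
proof -
  have eq: "rec_nat 0 (\<lambda>n r. r + b) a = a * b" for a b :: nat by (induction a) auto
  have "recfn 2 (\<lambda>xs. rec_nat 0 (\<lambda>n r. r + tl xs ! 0) (hd xs))"
    using recfn_prim[of 1 "\<lambda>ys. 0" "\<lambda>zs. zs ! 1 + zs ! 2"] recfn_const[of 1 0]
      recfn_add[OF recfn_proj[of 1 3] recfn_proj[of 2 3]]
    by (simp add: numeral_2_eq_2 numeral_3_eq_3)
  then have "recfn 2 (\<lambda>xs. xs ! 0 * xs ! 1)" by (rule recfn_cong) (auto simp: length_2_iff eq)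
  then show ?thesis using assms by (rule recfn_op2)
qed

lemma recfn_triangle:
  assumes "recfn k a"
  shows "recfn k (\<lambda>xs. triangle (a xs))"
proof -
  have eq: "rec_nat 0 (\<lambda>n r. r + Suc n) a = triangle a" for a :: nat by (induction a) auto
  have "recfn 1 (\<lambda>xs. rec_nat 0 (\<lambda>n r. r + Suc n) (hd xs))"
    using recfn_prim[of 0 "\<lambda>ys. 0" "\<lambda>zs. zs ! 1 + Suc (zs ! 0)"] recfn_const[of 0 0]
      recfn_add[OF recfn_proj[of 1 2] recfn_Suc[OF recfn_proj[of 0 2]]]
    by (simp add: numeral_2_eq_2)
  then have "recfn 1 (\<lambda>xs. triangle (xs ! 0))" by (rule recfn_cong) (auto simp: length_Suc_0_iff eq[simplified])
  then show ?thesis using assms by (rule recfn_op1)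
qed

lemma card_lessThan_Suc_Collect:
  "card {y. y < Suc m \<and> P y} = card {y. y < m \<and> P y} + (if P m then 1 else 0)"
proof -
  have "{y. y < Suc m \<and> P y} = {y. y < m \<and> P y} \<union> (if P m then {m} else {})"
    by (auto simp: less_Suc_eq)
  then show ?thesis by auto
qed

lemma recfn_count:
  assumes Q: "recfn (Suc k) Q" and b: "recfn k b"
  shows "recfn k (\<lambda>xs. card {y. y < b xs \<and> Q (y # xs) \<noteq> 0})"
proof -
  have "recfn (Suc (Suc k)) (\<lambda>zs. Q (map (\<lambda>g. g zs) ((\<lambda>zs. zs ! 0) # map (\<lambda>i zs. zs ! (i + 2)) [0..<k])))"
    by (rule recfn_comp) (use Q in \<open>auto intro!: recfn_proj\<close>)
  then have Q2: "recfn (Suc (Suc k)) (\<lambda>zs. Q (hd zs # tl (tl zs)))"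
    by (rule recfn_cong) (auto intro!: arg_cong[where f = Q] nth_equalityI
        simp: nth_tl nth_Cons split: nat.split, metis hd_conv_nth list.size(3) nat.distinct(1))
  \<comment> \<open>1 - (1 - q) is the indicator of q \<noteq> 0\<close>
  have step: "recfn (Suc (Suc k)) (\<lambda>zs. zs ! 1 + (1 - (1 - Q (hd zs # tl (tl zs)))))"
    by (intro recfn_add recfn_diff recfn_const recfn_proj Q2) auto
  have count: "rec_nat 0 (\<lambda>n r. r + (1 - (1 - Q (n # ys)))) m = card {y. y < m \<and> Q (y # ys) \<noteq> 0}" for m ys
    by (induction m) (auto simp: card_lessThan_Suc_Collect)
  have map_eq: "map (\<lambda>g. g xs) (b # map (\<lambda>i xs. xs ! i) [0..<k]) = b xs # xs"
    if "length xs = k" for xs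
    using that by (auto intro!: nth_equalityI)
  have "recfn k (\<lambda>xs. (\<lambda>xs. rec_nat 0 (\<lambda>n r. r + (1 - (1 - Q (n # tl xs)))) (hd xs))
                    (map (\<lambda>g. g xs) (b # map (\<lambda>i xs. xs ! i) [0..<k])))"
    by (rule recfn_comp) (use recfn_prim[OF recfn_const step] b in \<open>auto intro!: recfn_proj\<close>)
  then show ?thesis
    by (rule recfn_cong) (simp only: map_eq list.sel count)
qed

definition recpred :: "nat \<Rightarrow> (nat list \<Rightarrow> bool) \<Rightarrow> bool" where
  "recpred k P \<longleftrightarrow> recfn k (\<lambda>xs. if P xs then 1 else 0)"

lemma recpred_eq: "recfn k a \<Longrightarrow> recfn k b \<Longrightarrow> recpred k (\<lambda>xs. a xs = b xs)"
  unfolding recpred_def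
  by (rule recfn_cong[where f = "\<lambda>xs. 1 - ((a xs - b xs) + (b xs - a xs))"])
    (auto intro!: recfn_diff recfn_add recfn_const)

lemma recpred_less: "recfn k a \<Longrightarrow> recfn k b \<Longrightarrow> recpred k (\<lambda>xs. a xs < b xs)"
  unfolding recpred_def
  by (rule recfn_cong[where f = "\<lambda>xs. 1 - (1 - (b xs - a xs))"]) (auto intro!: recfn_diff recfn_const)

lemma recpred_le: "recfn k a \<Longrightarrow> recfn k b \<Longrightarrow> recpred k (\<lambda>xs. a xs \<le> b xs)"
  unfolding recpred_def
  by (rule recfn_cong[where f = "\<lambda>xs. 1 - (a xs - b xs)"]) (auto intro!: recfn_diff recfn_const)

lemma recpred_conj: "recpred k P \<Longrightarrow> recpred k Q \<Longrightarrow> recpred k (\<lambda>xs. P xs \<and> Q xs)"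
  unfolding recpred_def
  by (rule recfn_cong[where f = "\<lambda>xs. (if P xs then 1 else 0) * (if Q xs then 1 else 0)"])
    (auto intro!: recfn_mult)

lemma recpred_not: "recpred k P \<Longrightarrow> recpred k (\<lambda>xs. \<not> P xs)"
  unfolding recpred_def
  by (rule recfn_cong[where f = "\<lambda>xs. 1 - (if P xs then 1 else 0)"]) (auto intro!: recfn_diff recfn_const)

lemma recfn_If: "recpred k P \<Longrightarrow> recfn k a \<Longrightarrow> recfn k b \<Longrightarrow> recfn k (\<lambda>xs. if P xs then a xs else b xs)"
  unfolding recpred_def
  by (rule recfn_cong[where f = "\<lambda>xs. (if P xs then 1 else 0) * a xs + (1 - (if P xs then 1 else 0)) * b xs"])
    (auto intro!: recfn_mult recfn_add recfn_diff recfn_const)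

definition npair :: "nat \<Rightarrow> nat \<Rightarrow> nat" where
  "npair a b = prod_encode (a, b)"

definition nfst :: "nat \<Rightarrow> nat" where
  "nfst z = fst (prod_decode z)"

definition nsnd :: "nat \<Rightarrow> nat" where
  "nsnd z = snd (prod_decode z)"

lemma nfst_npair [simp]: "nfst (npair a b) = a"
  and nsnd_npair [simp]: "nsnd (npair a b) = b"
  and npair_nfst_nsnd [simp]: "npair (nfst z) (nsnd z) = z"
  and npair_eq_iff [simp]: "npair a b = npair c d \<longleftrightarrow> a = c \<and> b = d"
  by (simp_all add: npair_def nfst_def nsnd_def)

lemma le_npair1: "a \<le> npair a b" and le_npair2: "b \<le> npair a b"
  by (simp_all add: npair_def le_prod_encode_1 le_prod_encode_2)

lemma recfn_npair: "recfn k a \<Longrightarrow> recfn k b \<Longrightarrow> recfn k (\<lambda>xs. npair (a xs) (b xs))"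
  unfolding npair_def prod_encode_def by (simp, intro recfn_add recfn_triangle)

lemma le_triangle: "n \<le> triangle n"
  by (induction n) auto

lemma triangle_mono: "m \<le> n \<Longrightarrow> triangle m \<le> triangle n"
  by (induction n rule: dec_induct) auto

text \<open>Since npair a b = triangle (a + b) + a, decoding amounts to finding the diagonal a + b,
  which is a bounded count.\<close>

definition npair_diag :: "nat \<Rightarrow> nat" where
  "npair_diag z = card {w. w < Suc z \<and> 1 \<le> w \<and> triangle w \<le> z}"

lemma npair_diag_npair: "npair_diag (npair a b) = a + b"
proof -
  have "{w. w < Suc (npair a b) \<and> 1 \<le> w \<and> triangle w \<le> npair a b} = {1..a + b}"
  proof (intro set_eqI iffI)
    fix w assume w: "w \<in> {w. w < Suc (npair a b) \<and> 1 \<le> w \<and> triangle w \<le> npair a b}"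
    have "w \<le> a + b"
    proof (rule ccontr)
      assume "\<not> w \<le> a + b"
      then have "triangle (Suc (a + b)) \<le> triangle w" by (intro triangle_mono) auto
      then show False using w by (simp add: npair_def prod_encode_def)
    qed
    then show "w \<in> {1..a + b}" using w by auto
  next
    fix w assume w: "w \<in> {1..a + b}"
    have "triangle w \<le> triangle (a + b)" using w by (intro triangle_mono) auto
    moreover have "a + b \<le> triangle (a + b)" by (rule le_triangle)
    ultimately show "w \<in> {w. w < Suc (npair a b) \<and> 1 \<le> w \<and> triangle w \<le> npair a b}"
      using w by (auto simp: npair_def prod_encode_def)
  qed
  then show ?thesis unfolding npair_diag_def by simp
qed

lemma nfst_eq: "nfst z = z - triangle (npair_diag z)"
proof -
  have "triangle (nfst z + nsnd z) + nfst z = z"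
    using npair_nfst_nsnd[of z] unfolding npair_def prod_encode_def by simp
  then show ?thesis using npair_diag_npair[of "nfst z" "nsnd z"] by simp
qed

lemma nsnd_eq: "nsnd z = npair_diag z - nfst z"
  using npair_diag_npair[of "nfst z" "nsnd z"] by simp

lemma recfn_npair_diag:
  assumes "recfn k a"
  shows "recfn k (\<lambda>xs. npair_diag (a xs))"
proof -
  have "recpred (Suc 1) (\<lambda>ys. 1 \<le> ys ! 0 \<and> triangle (ys ! 0) \<le> ys ! 1)"
    by (intro recpred_conj recpred_le recfn_const recfn_proj recfn_triangle) auto
  then have "recfn 1 (\<lambda>xs. card {y. y < Suc (xs ! 0) \<and>
      (if 1 \<le> (y # xs) ! 0 \<and> triangle ((y # xs) ! 0) \<le> (y # xs) ! 1 then 1 else 0::nat) \<noteq> 0})"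
    unfolding recpred_def by (rule recfn_count) (intro recfn_Suc recfn_proj, simp)
  then have "recfn 1 (\<lambda>xs. npair_diag (xs ! 0))"
    by (rule recfn_cong) (auto simp: npair_diag_def length_Suc_0_iff intro!: arg_cong[where f = card])
  then show ?thesis using assms by (rule recfn_op1)
qed

lemma recfn_nfst: "recfn k a \<Longrightarrow> recfn k (\<lambda>xs. nfst (a xs))"
  unfolding nfst_eq by (intro recfn_diff recfn_triangle recfn_npair_diag)

lemma recfn_nsnd: "recfn k a \<Longrightarrow> recfn k (\<lambda>xs. nsnd (a xs))"
  unfolding nsnd_eq by (intro recfn_diff recfn_nfst recfn_npair_diag)

definition computable_pred :: "(nat \<Rightarrow> bool) \<Rightarrow> bool" where
  "computable_pred P \<longleftrightarrow> computable_fun (\<lambda>x. if P x then 1 else 0)"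

lemma computable_fun_iff_recfn: "computable_fun f \<longleftrightarrow> recfn 1 (\<lambda>xs. f (hd xs))"
  unfolding computable_fun_def recfn_def
  by (metis One_nat_def length_Suc_0_iff list.sel(1) length_Cons list.size(3))

lemma computable_pred_iff_recpred: "computable_pred P \<longleftrightarrow> recpred 1 (\<lambda>xs. P (hd xs))"
  unfolding computable_pred_def recpred_def computable_fun_iff_recfn by simp

lemma recfn_hd: "recfn 1 hd"
  by (rule recfn_cong[OF recfn_proj[of 0 1]]) (auto simp: length_Suc_0_iff)

lemma recfn_if_computable_fun: "computable_fun f \<Longrightarrow> recfn 1 (\<lambda>xs. f (xs ! 0))"
  unfolding computable_fun_iff_recfn by (erule recfn_cong) (auto simp: length_Suc_0_iff)

lemma computable_fun_id: "computable_fun (\<lambda>x. x)"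
  unfolding computable_fun_iff_recfn by (rule recfn_hd)

lemma computable_fun_const: "computable_fun (\<lambda>x. c)"
  unfolding computable_fun_iff_recfn by (rule recfn_const)

lemma computable_fun_comp:
  "computable_fun g \<Longrightarrow> computable_fun a \<Longrightarrow> computable_fun (\<lambda>x. g (a x))"
  unfolding computable_fun_iff_recfn[of "\<lambda>x. g (a x)"] computable_fun_iff_recfn[of a]
  by (rule recfn_op1[OF recfn_if_computable_fun])

lemma computable_pred_comp: "computable_pred P \<Longrightarrow> computable_fun a \<Longrightarrow> computable_pred (\<lambda>x. P (a x))"
  unfolding computable_pred_def by (rule computable_fun_comp[where g = "\<lambda>x. if P x then 1 else 0"])

lemma computable_fun_Suc: "computable_fun a \<Longrightarrow> computable_fun (\<lambda>x. Suc (a x))"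
  unfolding computable_fun_iff_recfn by (rule recfn_Suc)

lemma computable_fun_add:
  "computable_fun a \<Longrightarrow> computable_fun b \<Longrightarrow> computable_fun (\<lambda>x. a x + b x)"
  unfolding computable_fun_iff_recfn by (rule recfn_add)

lemma computable_fun_diff:
  "computable_fun a \<Longrightarrow> computable_fun b \<Longrightarrow> computable_fun (\<lambda>x. a x - b x)"
  unfolding computable_fun_iff_recfn by (rule recfn_diff)

lemma computable_fun_mult:
  "computable_fun a \<Longrightarrow> computable_fun b \<Longrightarrow> computable_fun (\<lambda>x. a x * b x)"
  unfolding computable_fun_iff_recfn by (rule recfn_mult)

lemma computable_fun_npair:
  "computable_fun a \<Longrightarrow> computable_fun b \<Longrightarrow> computable_fun (\<lambda>x. npair (a x) (b x))"
  unfolding computable_fun_iff_recfn by (rule recfn_npair)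

lemma computable_fun_nfst: "computable_fun a \<Longrightarrow> computable_fun (\<lambda>x. nfst (a x))"
  unfolding computable_fun_iff_recfn by (rule recfn_nfst)

lemma computable_fun_nsnd: "computable_fun a \<Longrightarrow> computable_fun (\<lambda>x. nsnd (a x))"
  unfolding computable_fun_iff_recfn by (rule recfn_nsnd)

lemma computable_fun_If:
  "computable_pred P \<Longrightarrow> computable_fun a \<Longrightarrow> computable_fun b \<Longrightarrow>
    computable_fun (\<lambda>x. if P x then a x else b x)"
  unfolding computable_fun_iff_recfn computable_pred_iff_recpred by (rule recfn_If)

lemma computable_pred_eq: "computable_fun a \<Longrightarrow> computable_fun b \<Longrightarrow> computable_pred (\<lambda>x. a x = b x)"
  unfolding computable_fun_iff_recfn computable_pred_iff_recpred by (rule recpred_eq)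

lemma computable_pred_less: "computable_fun a \<Longrightarrow> computable_fun b \<Longrightarrow> computable_pred (\<lambda>x. a x < b x)"
  unfolding computable_fun_iff_recfn computable_pred_iff_recpred by (rule recpred_less)

lemma computable_pred_le: "computable_fun a \<Longrightarrow> computable_fun b \<Longrightarrow> computable_pred (\<lambda>x. a x \<le> b x)"
  unfolding computable_fun_iff_recfn computable_pred_iff_recpred by (rule recpred_le)

lemma computable_pred_conj: "computable_pred P \<Longrightarrow> computable_pred Q \<Longrightarrow> computable_pred (\<lambda>x. P x \<and> Q x)"
  unfolding computable_pred_iff_recpred by (rule recpred_conj)

lemma computable_pred_not: "computable_pred P \<Longrightarrow> computable_pred (\<lambda>x. \<not> P x)"
  unfolding computable_pred_iff_recpred by (rule recpred_not)

lemma computable_pred_disj: "computable_pred P \<Longrightarrow> computable_pred Q \<Longrightarrow> computable_pred (\<lambda>x. P x \<or> Q x)"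
  using computable_pred_not[OF computable_pred_conj[OF computable_pred_not computable_pred_not], of P Q] by simp

lemma computable_pred_imp: "computable_pred P \<Longrightarrow> computable_pred Q \<Longrightarrow> computable_pred (\<lambda>x. P x \<longrightarrow> Q x)"
  using computable_pred_disj[OF computable_pred_not, of P Q] by simp

lemma computable_pred_const: "computable_pred (\<lambda>x. c)"
  unfolding computable_pred_def by (rule computable_fun_const)

lemma computable_fun_card_less:
  assumes b: "computable_fun b" and P: "computable_pred (\<lambda>z. P (nfst z) (nsnd z))"
  shows "computable_fun (\<lambda>x. card {y. y < b x \<and> P y x})"
proof -
  have "recfn 2 (\<lambda>ys. (\<lambda>z. if P (nfst z) (nsnd z) then 1 else 0) (npair (ys ! 0) (ys ! 1)))"
    by (rule recfn_op1[OF recfn_if_computable_fun]) (use P in \<open>simp add: computable_pred_def,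
        intro recfn_npair recfn_proj, auto\<close>)
  then have "recfn (Suc 1) (\<lambda>ys. if P (ys ! 0) (ys ! 1) then 1 else 0)"
    by (simp add: numeral_2_eq_2)
  then have "recfn 1 (\<lambda>xs. card {y. y < b (hd xs) \<and>
      (\<lambda>ys. if P (ys ! 0) (ys ! 1) then 1 else 0::nat) (y # xs) \<noteq> 0})"
    by (rule recfn_count) (use b in \<open>simp add: computable_fun_iff_recfn\<close>)
  then show ?thesis unfolding computable_fun_iff_recfn
    by (rule recfn_cong) (auto simp: length_Suc_0_iff intro!: arg_cong[where f = card])
qed

lemma computable_pred_ex_less:
  assumes "computable_fun b" and "computable_pred (\<lambda>z. P (nfst z) (nsnd z))"
  shows "computable_pred (\<lambda>x. \<exists>y<b x. P y x)"
proof -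
  have "computable_pred (\<lambda>x. 0 < card {y. y < b x \<and> P y x})"
    by (intro computable_pred_less computable_fun_const computable_fun_card_less assms)
  moreover have "0 < card {y. y < b x \<and> P y x} \<longleftrightarrow> (\<exists>y<b x. P y x)" for x
    by (auto simp: card_gt_0_iff)
  ultimately show ?thesis by simp
qed

lemma computable_pred_all_less:
  assumes "computable_fun b" and "computable_pred (\<lambda>z. P (nfst z) (nsnd z))"
  shows "computable_pred (\<lambda>x. \<forall>y<b x. P y x)"
proof -
  have "computable_pred (\<lambda>x. \<not> (\<exists>y<b x. \<not> P y x))"
    by (intro computable_pred_not computable_pred_ex_less assms)
  then show ?thesis by simp
qed

lemma computable_fun_rec_nat:
  assumes f: "computable_fun f" and n: "computable_fun n"
    and g: "computable_fun (\<lambda>z. g (nfst z) (nfst (nsnd z)) (nsnd (nsnd z)))"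
  shows "computable_fun (\<lambda>x. rec_nat (f x) (\<lambda>m r. g m r x) (n x))"
proof -
  have G: "recfn (Suc (Suc 1))
      (\<lambda>zs. (\<lambda>z. g (nfst z) (nfst (nsnd z)) (nsnd (nsnd z))) (npair (zs ! 0) (npair (zs ! 1) (zs ! 2))))"
    by (rule recfn_op1[OF recfn_if_computable_fun[OF g]]) (intro recfn_npair recfn_proj, auto)
  have "recfn 2 (\<lambda>xs. rec_nat (f (hd (tl xs))) (\<lambda>m r. g m r (tl xs ! 0)) (hd xs))"
    using recfn_prim[OF f[unfolded computable_fun_iff_recfn] G] by (simp add: numeral_2_eq_2)
  then have "recfn 2 (\<lambda>xs. rec_nat (f (xs ! 1)) (\<lambda>m r. g m r (xs ! 1)) (xs ! 0))"
    by (rule recfn_cong) (auto simp: length_2_iff)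
  then have "recfn 1 (\<lambda>xs. rec_nat (f (hd xs)) (\<lambda>m r. g m r (hd xs)) (n (hd xs)))"
    by (rule recfn_op2) (use n in \<open>simp add: computable_fun_iff_recfn\<close>, rule recfn_hd)
  then show ?thesis unfolding computable_fun_iff_recfn .
qed

lemmas computable_intros =
  computable_fun_id computable_fun_const computable_fun_Suc computable_fun_add computable_fun_diff
  computable_fun_mult computable_fun_npair computable_fun_nfst computable_fun_nsnd computable_fun_If
  computable_fun_card_less computable_pred_eq computable_pred_less computable_pred_le
  computable_pred_conj computable_pred_disj computable_pred_imp computable_pred_not
  computable_pred_const computable_pred_ex_less computable_pred_all_less

text \<open>Arithmetic counterparts of the list operations on list_encode codes; unlike list_decode
  they are visibly computable.\<close>

definition code_Cons :: "nat \<Rightarrow> nat \<Rightarrow> nat" where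
  "code_Cons x c = Suc (npair x c)"

definition code_hd :: "nat \<Rightarrow> nat" where
  "code_hd c = nfst (c - 1)"

definition code_tl :: "nat \<Rightarrow> nat" where
  "code_tl c = nsnd (c - 1)"

definition code_drop :: "nat \<Rightarrow> nat \<Rightarrow> nat" where
  "code_drop c n = rec_nat c (\<lambda>m r. code_tl r) n"

definition code_nth :: "nat \<Rightarrow> nat \<Rightarrow> nat" where
  "code_nth c i = code_hd (code_drop c i)"

definition code_length :: "nat \<Rightarrow> nat" where
  "code_length c = card {n. n < c \<and> code_drop c n \<noteq> 0}"

lemma code_hd_code_Cons [simp]: "code_hd (code_Cons x c) = x"
  and code_tl_code_Cons [simp]: "code_tl (code_Cons x c) = c"
  by (simp_all add: code_Cons_def code_hd_def code_tl_def)

lemma code_Cons_pos [simp]: "0 < code_Cons x c"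
  by (simp add: code_Cons_def)

lemma list_encode_Cons [simp]: "list_encode (x # xs) = code_Cons x (list_encode xs)"
  by (simp add: code_Cons_def npair_def)

declare list_encode.simps(2) [simp del]

lemma list_encode_eq_0_iff [simp]: "list_encode xs = 0 \<longleftrightarrow> xs = []"
  by (cases xs) (simp_all add: code_Cons_def)

lemma code_tl_list_encode: "code_tl (list_encode xs) = list_encode (tl xs)"
  by (cases xs) (simp_all, metis code_tl_def diff_0_eq_0 le_npair2 le_zero_eq npair_nfst_nsnd)

lemma code_drop_list_encode: "code_drop (list_encode xs) n = list_encode (drop n xs)"
  by (induction n) (simp_all add: code_drop_def code_tl_list_encode drop_Suc tl_drop)

lemma code_nth_list_encode [simp]: "i < length xs \<Longrightarrow> code_nth (list_encode xs) i = xs ! i"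
  by (simp add: code_nth_def code_drop_list_encode flip: Cons_nth_drop_Suc)

lemma length_le_list_encode: "length xs \<le> list_encode xs"
  by (induction xs) (auto simp: code_Cons_def intro: le_trans[OF _ le_npair2])

lemma code_length_list_encode [simp]: "code_length (list_encode xs) = length xs"
proof -
  have "{n. n < list_encode xs \<and> code_drop (list_encode xs) n \<noteq> 0} = {n. n < length xs}"
    using length_le_list_encode[of xs] by (auto simp: code_drop_list_encode)
  then show ?thesis by (simp add: code_length_def)
qed

lemma less_of_in_set_decode: "F \<in> set_decode d \<Longrightarrow> F < d"
proof -
  assume "F \<in> set_decode d"
  then have "d div 2 ^ F \<noteq> 0" unfolding set_decode_def by (auto simp: odd_pos)
  then have "2 ^ F \<le> d" by (simp add: div_eq_0_iff not_less)
  then show ?thesis using less_exp[of F] by linarith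
qed

section \<open>Finite derivations of evaluation judgements\<close>

fun recf_code :: "recf \<Rightarrow> nat" where
  "recf_code Z = npair 0 0"
| "recf_code S = npair 1 0"
| "recf_code (Proj i) = npair 2 i"
| "recf_code (Comp f gs) = npair 3 (npair (recf_code f) (list_encode (map recf_code gs)))"
| "recf_code (Prim f g) = npair 4 (npair (recf_code f) (recf_code g))"
| "recf_code (Mn f) = npair 5 (recf_code f)"

definition eval_code :: "nat \<Rightarrow> nat \<Rightarrow> nat \<Rightarrow> nat" where
  "eval_code c a y = npair c (npair a y)"

lemma eval_code_simps [simp]:
  "nfst (eval_code c a y) = c" "nfst (nsnd (eval_code c a y)) = a" "nsnd (nsnd (eval_code c a y)) = y"
  by (simp_all add: eval_code_def)

lemma eval_code_nfst_nsnd: "eval_code (nfst F) (nfst (nsnd F)) (nsnd (nsnd F)) = F"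
  by (simp add: eval_code_def)

lemma le_eval_code: "c \<le> eval_code c a y" "a \<le> eval_code c a y" "y \<le> eval_code c a y"
  unfolding eval_code_def by (meson le_npair1 le_npair2 order.trans)+

text \<open>The number eval_code (recf_code p) (list_encode xs) y stands for the judgement eval p xs y.
  justified M Bd F holds if F is the conclusion of a rule of eval whose premises satisfy M;
  premises and intermediate values that do not occur in F are required to satisfy Bd, which
  is what makes the check decidable once Bd is a bound.\<close>

definition justified :: "(nat \<Rightarrow> bool) \<Rightarrow> (nat \<Rightarrow> bool) \<Rightarrow> nat \<Rightarrow> bool" where
  "justified M Bd F \<longleftrightarrow>
    (nfst (nfst F) = 0 \<and> nsnd (nsnd F) = 0) \<or>
    (nfst (nfst F) = 1 \<and> nfst (nsnd F) \<noteq> 0 \<and> nsnd (nsnd F) = Suc (code_hd (nfst (nsnd F)))) \<or>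
    (nfst (nfst F) = 2 \<and> nsnd (nfst F) < code_length (nfst (nsnd F)) \<and>
       nsnd (nsnd F) = code_nth (nfst (nsnd F)) (nsnd (nfst F))) \<or>
    (nfst (nfst F) = 3 \<and> (\<exists>G. Bd G \<and> M G \<and> nfst G = nfst (nsnd (nfst F)) \<and> nsnd (nsnd G) = nsnd (nsnd F) \<and>
        code_length (nfst (nsnd G)) = code_length (nsnd (nsnd (nfst F))) \<and>
        (\<forall>k<code_length (nsnd (nsnd (nfst F))).
           M (eval_code (code_nth (nsnd (nsnd (nfst F))) k) (nfst (nsnd F)) (code_nth (nfst (nsnd G)) k))))) \<or>
    (nfst (nfst F) = 4 \<and> nfst (nsnd F) \<noteq> 0 \<and>
       (code_hd (nfst (nsnd F)) = 0 \<longrightarrow>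
          M (eval_code (nfst (nsnd (nfst F))) (code_tl (nfst (nsnd F))) (nsnd (nsnd F)))) \<and>
       (code_hd (nfst (nsnd F)) \<noteq> 0 \<longrightarrow> (\<exists>z. Bd z \<and>
          M (eval_code (nfst F) (code_Cons (code_hd (nfst (nsnd F)) - 1) (code_tl (nfst (nsnd F)))) z) \<and>
          M (eval_code (nsnd (nsnd (nfst F)))
               (code_Cons (code_hd (nfst (nsnd F)) - 1) (code_Cons z (code_tl (nfst (nsnd F)))))
               (nsnd (nsnd F)))))) \<or>
    (nfst (nfst F) = 5 \<and> M (eval_code (nsnd (nfst F)) (code_Cons (nsnd (nsnd F)) (nfst (nsnd F))) 0) \<and>
       (\<forall>m<nsnd (nsnd F). \<exists>z. Bd z \<and> M (eval_code (nsnd (nfst F)) (code_Cons m (nfst (nsnd F))) (Suc z))))"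

definition deriv_closed :: "(nat \<Rightarrow> bool) \<Rightarrow> (nat \<Rightarrow> bool) \<Rightarrow> bool" where
  "deriv_closed M Bd \<longleftrightarrow> (\<forall>F. M F \<longrightarrow> justified M Bd F)"

lemma justified_mono:
  assumes "justified M Bd F" and "\<And>G. M G \<Longrightarrow> M' G" and "\<And>G. Bd G \<Longrightarrow> M G \<Longrightarrow> Bd' G"
    and "\<And>c a z. Bd z \<Longrightarrow> M (eval_code c a z) \<Longrightarrow> Bd' z"
    and "\<And>c a z. Bd z \<Longrightarrow> M (eval_code c a (Suc z)) \<Longrightarrow> Bd' z"
  shows "justified M' Bd' F"
  using assms(1) unfolding justified_def
  apply (elim disjE)
       apply (rule disjI1, blast)
      apply (rule disjI2, rule disjI1, blast)
     apply (rule disjI2, rule disjI2, rule disjI1, blast)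
    apply (rule disjI2, rule disjI2, rule disjI2, rule disjI1, use assms(2,3) in blast)
   apply (rule disjI2, rule disjI2, rule disjI2, rule disjI2, rule disjI1, use assms(2,4) in blast)
  apply (rule disjI2, rule disjI2, rule disjI2, rule disjI2, rule disjI2, use assms(2,5) in blast)
  done

lemma deriv_closed_sound:
  assumes closed: "deriv_closed M Bd"
  shows "M (eval_code (recf_code p) (list_encode xs) y) \<Longrightarrow> eval p xs y"
proof (induction p arbitrary: xs y)
  have just: "M F \<Longrightarrow> justified M Bd F" for F
    using closed unfolding deriv_closed_def by blast
  {
    case Z
    then have "justified M Bd (eval_code (recf_code Z) (list_encode xs) y)" by (rule just)
    then have "y = 0" unfolding justified_def by simp
    then show ?case by (simp add: eval_Z)
  next
    case S
    then have "justified M Bd (eval_code (recf_code S) (list_encode xs) y)" by (rule just)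
    then have "xs \<noteq> [] \<and> y = Suc (code_hd (list_encode xs))" unfolding justified_def by simp
    then show ?case by (cases xs) (auto intro: eval_S)
  next
    case (Proj i)
    then have "justified M Bd (eval_code (recf_code (Proj i)) (list_encode xs) y)" by (rule just)
    then have "i < length xs \<and> y = xs ! i" unfolding justified_def by simp
    then show ?case by (auto intro: eval_Proj)
  next
    case (Comp f gs)
    then obtain G where G: "M G" "nfst G = recf_code f" "nsnd (nsnd G) = y"
      "code_length (nfst (nsnd G)) = length gs"
      "\<forall>k<length gs. M (eval_code (recf_code (gs ! k)) (list_encode xs) (code_nth (nfst (nsnd G)) k))"
      using just[OF Comp.prems] unfolding justified_def by auto
    define ys where "ys = list_decode (nfst (nsnd G))"
    have ys: "nfst (nsnd G) = list_encode ys" by (simp add: ys_def)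
    have G_eq: "G = eval_code (recf_code f) (list_encode ys) y"
      using eval_code_nfst_nsnd[of G] G(2,3) ys by simp
    have "list_all2 (\<lambda>g y. eval g xs y) gs ys"
      using G(4,5) Comp.IH(2) by (auto simp: ys list_all2_conv_all_nth)
    moreover have "eval f ys y" using Comp.IH(1) G(1) G_eq by simp
    ultimately show ?case by (rule eval_Comp)
  next
    case (Prim f g)
    have "M (eval_code (recf_code (Prim f g)) (list_encode (n # xs')) y') \<Longrightarrow> eval (Prim f g) (n # xs') y'"
      for n xs' y'
    proof (induction n arbitrary: y')
      case 0
      then have "M (eval_code (recf_code f) (list_encode xs') y')"
        using just[OF "0.prems"] unfolding justified_def by simp
      then show ?case using Prim.IH(1) by (blast intro: eval_Prim0)
    next
      case (Suc n)
      then obtain z where "M (eval_code (recf_code (Prim f g)) (list_encode (n # xs')) z)"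
        "M (eval_code (recf_code g) (list_encode (n # z # xs')) y')"
        using just[OF Suc.prems] unfolding justified_def by auto
      then show ?case using Suc.IH Prim.IH(2) by (blast intro: eval_PrimS)
    qed
    moreover have "xs \<noteq> []" using just[OF Prim.prems] unfolding justified_def by simp
    ultimately show ?case using Prim.prems by (auto simp: neq_Nil_conv)
  next
    case (Mn f)
    then have "M (eval_code (recf_code f) (list_encode (y # xs)) 0)"
      and "\<forall>m<y. \<exists>z. M (eval_code (recf_code f) (list_encode (m # xs)) (Suc z))"
      using just[OF Mn.prems] unfolding justified_def by auto
    then show ?case using Mn.IH by (blast intro: eval_Mn)
  }
qed

definition derivable :: "nat \<Rightarrow> bool" where
  "derivable F \<longleftrightarrow> (\<exists>D. finite D \<and> deriv_closed (\<lambda>G. G \<in> D) (\<lambda>_. True) \<and> F \<in> D)"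

lemma derivable_step:
  assumes "finite P" and "\<forall>G\<in>P. derivable G" and "justified (\<lambda>G. G \<in> P) (\<lambda>_. True) F"
  shows "derivable F"
proof -
  obtain D where D: "\<forall>G\<in>P. finite (D G) \<and> deriv_closed (\<lambda>H. H \<in> D G) (\<lambda>_. True) \<and> G \<in> D G"
    using bchoice[OF assms(2)[unfolded derivable_def]] ..
  let ?D = "insert F (\<Union>G\<in>P. D G)"
  have "justified (\<lambda>H. H \<in> ?D) (\<lambda>_. True) H" if H: "H \<in> ?D" for H
  proof (cases "H = F")
    case True
    show ?thesis unfolding True using assms(3) by (rule justified_mono) (use D in blast)+
  next
    case False
    then obtain G where G: "G \<in> P" "H \<in> D G" using H by blast
    then have "justified (\<lambda>H. H \<in> D G) (\<lambda>_. True) H" using D unfolding deriv_closed_def by blast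
    then show ?thesis by (rule justified_mono) (use G in blast)+
  qed
  moreover have "finite ?D" using assms(1) D by blast
  ultimately show ?thesis unfolding derivable_def deriv_closed_def by blast
qed

lemma eval_derivable: "eval p xs y \<Longrightarrow> derivable (eval_code (recf_code p) (list_encode xs) y)"
proof (induction rule: eval.induct)
  case (eval_Z xs)
  show ?case by (rule derivable_step[of "{}"]) (simp_all add: justified_def)
next
  case (eval_S x xs)
  show ?case by (rule derivable_step[of "{}"]) (simp_all add: justified_def)
next
  case (eval_Proj i xs)
  then show ?case by (intro derivable_step[of "{}"]) (simp_all add: justified_def)
next
  case (eval_Comp xs gs ys f z)
  have len: "length ys = length gs" using eval_Comp(1) by (simp add: list_all2_conv_all_nth)
  let ?G = "eval_code (recf_code f) (list_encode ys) z"
  let ?P = "insert ?G ((\<lambda>k. eval_code (recf_code (gs ! k)) (list_encode xs) (ys ! k)) ` {..<length gs})"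
  show ?case
  proof (rule derivable_step[of ?P])
    have "derivable (eval_code (recf_code (gs ! k)) (list_encode xs) (ys ! k))" if "k < length gs" for k
      using eval_Comp(1) that by (simp add: list_all2_conv_all_nth)
    with eval_Comp.IH(2) show "\<forall>G\<in>?P. derivable G" by simp
    have "eval_code (recf_code (gs ! k)) (list_encode xs) (ys ! k) \<in> ?P" if "k < length gs" for k
      using that by (intro insertI2 image_eqI[where x = k]) simp_all
    then show "justified (\<lambda>G. G \<in> ?P) (\<lambda>_. True) (eval_code (recf_code (Comp f gs)) (list_encode xs) z)"
      unfolding justified_def using len by (simp, intro exI[of _ ?G]) simp
  qed simp
next
  case (eval_Prim0 f xs y g)
  then show ?case by (intro derivable_step[of "{eval_code (recf_code f) (list_encode xs) y}"])
    (simp_all add: justified_def)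
next
  case (eval_PrimS f g n xs y z)
  let ?P = "{eval_code (recf_code (Prim f g)) (list_encode (n # xs)) y,
    eval_code (recf_code g) (list_encode (n # y # xs)) z}"
  show ?case
  proof (rule derivable_step[of ?P])
    show "\<forall>G\<in>?P. derivable G" using eval_PrimS.IH by simp
    show "justified (\<lambda>G. G \<in> ?P) (\<lambda>_. True) (eval_code (recf_code (Prim f g)) (list_encode (Suc n # xs)) z)"
      unfolding justified_def by (simp, rule exI[of _ y], simp)
  qed simp
next
  case (eval_Mn f n xs)
  obtain w where w: "\<And>m. m < n \<Longrightarrow> derivable (eval_code (recf_code f) (list_encode (m # xs)) (Suc (w m)))"
    using eval_Mn.IH(2) by metis
  let ?P = "insert (eval_code (recf_code f) (list_encode (n # xs)) 0)
    ((\<lambda>m. eval_code (recf_code f) (list_encode (m # xs)) (Suc (w m))) ` {..<n})"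
  show ?case
  proof (rule derivable_step[of ?P])
    show "\<forall>G\<in>?P. derivable G" using eval_Mn.IH(1) w by simp
    have "eval_code (recf_code f) (list_encode (m # xs)) (Suc (w m)) \<in> ?P" if "m < n" for m
      using that by (intro insertI2 image_eqI[where x = m]) simp_all
    then show "justified (\<lambda>G. G \<in> ?P) (\<lambda>_. True) (eval_code (recf_code (Mn f)) (list_encode xs) n)"
      unfolding justified_def by simp blast
  qed simp
qed

lemma list_all2_eval_det:
  "list_all2 (\<lambda>g y. \<forall>y'. eval g xs y' \<longrightarrow> y = y') gs ys \<Longrightarrow> list_all2 (\<lambda>g y. eval g xs y) gs ys'
    \<Longrightarrow> ys = ys'"
  by (induction gs arbitrary: ys ys') (auto simp: list_all2_Cons1)

lemma eval_det: "eval p xs y \<Longrightarrow> eval p xs y' \<Longrightarrow> y = y'"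
proof (induction arbitrary: y' rule: eval.induct)
  case (eval_Z xs)
  from eval_Z.prems show ?case by (cases rule: eval.cases) auto
next
  case (eval_S x xs)
  from eval_S.prems show ?case by (cases rule: eval.cases) auto
next
  case (eval_Proj i xs)
  from eval_Proj.prems show ?case by (cases rule: eval.cases) auto
next
  case (eval_Comp xs gs ys f z)
  from eval_Comp.prems obtain ys' where ys': "list_all2 (\<lambda>g y. eval g xs y) gs ys'" "eval f ys' y'"
    by (cases rule: eval.cases) auto
  have "list_all2 (\<lambda>g y. \<forall>y'. eval g xs y' \<longrightarrow> y = y') gs ys"
    using eval_Comp(1) by (rule list_all2_mono) auto
  then have "ys = ys'" using ys'(1) by (rule list_all2_eval_det)
  then show ?case using eval_Comp.IH ys'(2) by simp
next
  case (eval_Prim0 f xs y g)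
  from eval_Prim0.prems show ?case by (cases rule: eval.cases) (use eval_Prim0.IH in auto)
next
  case (eval_PrimS f g n xs y z)
  from eval_PrimS.prems obtain y2 where "eval (Prim f g) (n # xs) y2" "eval g (n # y2 # xs) y'"
    by (cases rule: eval.cases) auto
  then show ?case using eval_PrimS.IH by auto
next
  case (eval_Mn f n xs)
  from eval_Mn.prems have "eval f (y' # xs) 0" and "\<forall>m<y'. \<exists>y. eval f (m # xs) (Suc y)"
    by (cases rule: eval.cases; auto)+
  with eval_Mn.IH show ?case
    by (metis Zero_not_Suc linorder_neqE_nat)
qed

section \<open>Evaluation within a bound\<close>

definition closed_code :: "nat \<Rightarrow> bool" where
  "closed_code d \<longleftrightarrow> (\<forall>F<d. F \<in> set_decode d \<longrightarrow> justified (\<lambda>G. G \<in> set_decode d) (\<lambda>G. G < d) F)"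

definition eval_within :: "nat \<Rightarrow> nat \<Rightarrow> nat \<Rightarrow> nat \<Rightarrow> bool" where
  "eval_within e x t y \<longleftrightarrow> (\<exists>d<t. closed_code d \<and> eval_code e (code_Cons x 0) y \<in> set_decode d)"

lemma justified_bounded:
  assumes "justified M (\<lambda>_. True) F" and bound: "\<And>G. M G \<Longrightarrow> G < d"
  shows "justified M (\<lambda>G. G < d) F"
proof -
  have out_bound: "M (eval_code c a z) \<Longrightarrow> z < d" for c a z
    using bound le_eval_code(3)[of z c a] by (meson le_less_trans)
  show ?thesis using assms(1) by (rule justified_mono) (use bound out_bound Suc_lessD in blast)+
qed

lemma closed_code_set_encode:
  assumes "finite D" and "deriv_closed (\<lambda>G. G \<in> D) (\<lambda>_. True)"
  shows "closed_code (set_encode D)"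
  unfolding closed_code_def set_encode_inverse[OF assms(1)]
proof (intro allI impI)
  fix F assume "F \<in> D"
  then have "justified (\<lambda>G. G \<in> D) (\<lambda>_. True) F" using assms(2) unfolding deriv_closed_def by blast
  then show "justified (\<lambda>G. G \<in> D) (\<lambda>G. G < set_encode D) F"
    by (rule justified_bounded) (metis less_of_in_set_decode set_encode_inverse[OF assms(1)])
qed

lemma eval_within_sound: "eval_within (recf_code p) x t y \<Longrightarrow> eval p [x] y"
proof -
  assume "eval_within (recf_code p) x t y"
  then obtain d where "closed_code d" "eval_code (recf_code p) (list_encode [x]) y \<in> set_decode d"
    unfolding eval_within_def by auto
  moreover from \<open>closed_code d\<close> have "deriv_closed (\<lambda>G. G \<in> set_decode d) (\<lambda>G. G < d)"
    unfolding closed_code_def deriv_closed_def using less_of_in_set_decode by blast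
  ultimately show ?thesis using deriv_closed_sound by blast
qed

lemma eval_within_less: "eval_within e x t y \<Longrightarrow> y < t"
  unfolding eval_within_def using less_of_in_set_decode le_eval_code(3)
  by (metis le_less_trans less_trans)

lemma eval_within_complete: "eval p [x] y \<Longrightarrow> eventually (\<lambda>t. eval_within (recf_code p) x t y) sequentially"
proof -
  assume "eval p [x] y"
  then obtain D where D: "finite D" "deriv_closed (\<lambda>G. G \<in> D) (\<lambda>_. True)"
    "eval_code (recf_code p) (list_encode [x]) y \<in> D"
    using eval_derivable unfolding derivable_def by blast
  have "eval_within (recf_code p) x t y" if "Suc (set_encode D) \<le> t" for t
    unfolding eval_within_def using closed_code_set_encode[OF D(1,2)] D(3) that
    by (intro exI[of _ "set_encode D"]) (simp add: set_encode_inverse[OF D(1)])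
  then show ?thesis unfolding eventually_sequentially by blast
qed

lemma computable_fun_code_Cons:
  "computable_fun a \<Longrightarrow> computable_fun b \<Longrightarrow> computable_fun (\<lambda>x. code_Cons (a x) (b x))"
  unfolding code_Cons_def by (intro computable_intros)

lemma computable_fun_code_hd: "computable_fun a \<Longrightarrow> computable_fun (\<lambda>x. code_hd (a x))"
  unfolding code_hd_def by (intro computable_intros)

lemma computable_fun_code_tl: "computable_fun a \<Longrightarrow> computable_fun (\<lambda>x. code_tl (a x))"
  unfolding code_tl_def by (intro computable_intros)

lemma computable_fun_code_drop:
  "computable_fun a \<Longrightarrow> computable_fun b \<Longrightarrow> computable_fun (\<lambda>x. code_drop (a x) (b x))"
  unfolding code_drop_def by (intro computable_fun_rec_nat computable_fun_code_tl computable_intros)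

lemma computable_fun_code_nth:
  "computable_fun a \<Longrightarrow> computable_fun b \<Longrightarrow> computable_fun (\<lambda>x. code_nth (a x) (b x))"
  unfolding code_nth_def by (intro computable_fun_code_hd computable_fun_code_drop)

lemma computable_fun_code_length:
  assumes "computable_fun a" shows "computable_fun (\<lambda>x. code_length (a x))"
  unfolding code_length_def
  by (intro computable_fun_code_drop computable_fun_comp[OF assms] computable_intros assms)

lemma computable_fun_eval_code:
  "computable_fun a \<Longrightarrow> computable_fun b \<Longrightarrow> computable_fun c \<Longrightarrow>
    computable_fun (\<lambda>x. eval_code (a x) (b x) (c x))"
  unfolding eval_code_def by (intro computable_intros)

lemma computable_fun_power2:
  assumes "computable_fun a" shows "computable_fun (\<lambda>x. 2 ^ a x)"
proof -
  have power2_eq: "(2::nat) ^ n = rec_nat 1 (\<lambda>m r. 2 * r) n" for n by (induction n) auto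
  show ?thesis unfolding power2_eq by (intro computable_fun_rec_nat computable_intros assms)
qed

lemma div_eq_card: "(a::nat) div b = (if b = 0 then 0 else card {q. q < a \<and> Suc q * b \<le> a})"
proof (cases "b = 0")
  case False
  have "{q. q < a \<and> Suc q * b \<le> a} = {q. q < a div b}"
  proof (intro set_eqI iffI)
    fix q assume "q \<in> {q. q < a \<and> Suc q * b \<le> a}"
    then show "q \<in> {q. q < a div b}" using False by (simp add: less_eq_div_iff_mult_less_eq flip: Suc_le_eq)
  next
    fix q assume "q \<in> {q. q < a div b}"
    then have "Suc q * b \<le> a" using False by (simp add: less_eq_div_iff_mult_less_eq flip: Suc_le_eq)
    moreover have "q < a" using \<open>q \<in> {q. q < a div b}\<close> by (metis div_le_dividend less_le_trans mem_Collect_eq)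
    ultimately show "q \<in> {q. q < a \<and> Suc q * b \<le> a}" by simp
  qed
  then show ?thesis using False by simp
qed simp

lemma computable_fun_div:
  assumes a: "computable_fun a" and b: "computable_fun b"
  shows "computable_fun (\<lambda>x. a x div b x)"
  by (subst div_eq_card) (intro computable_intros computable_fun_comp[OF a] computable_fun_comp[OF b] a b)

lemma computable_pred_in_set_decode:
  assumes "computable_fun a" and "computable_fun b"
  shows "computable_pred (\<lambda>x. a x \<in> set_decode (b x))"
proof -
  have odd_eq: "odd (v::nat) \<longleftrightarrow> v - 2 * (v div 2) = 1" for v by presburger
  show ?thesis
    unfolding set_decode_def mem_Collect_eq odd_eq
    by (intro computable_intros computable_fun_div computable_fun_power2 assms)
qed

lemma computable_pred_closed_code: "computable_pred closed_code"
  unfolding closed_code_def justified_def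
  by (intro computable_intros computable_fun_code_Cons computable_fun_code_hd computable_fun_code_tl
      computable_fun_code_nth computable_fun_code_length computable_fun_eval_code
      computable_pred_in_set_decode)

lemma computable_pred_eval_within:
  assumes e: "computable_fun e" and x: "computable_fun x" and t: "computable_fun t" and y: "computable_fun y"
  shows "computable_pred (\<lambda>w. eval_within (e w) (x w) (t w) (y w))"
  unfolding eval_within_def
  by (intro computable_intros computable_pred_comp[OF computable_pred_closed_code]
      computable_fun_code_Cons computable_fun_eval_code computable_pred_in_set_decode
      computable_fun_comp[OF e] computable_fun_comp[OF x] computable_fun_comp[OF t]
      computable_fun_comp[OF y] e x t y)

lemma computable_rel_of_pred:
  assumes "computable_pred (\<lambda>z. (nfst z, nsnd z) \<in> R)"
  shows "computable_rel R"
proof -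
  have "recfn 2 (\<lambda>xs. (\<lambda>z. if (nfst z, nsnd z) \<in> R then 1 else 0) (npair (xs ! 0) (xs ! 1)))"
    by (rule recfn_op1[OF recfn_if_computable_fun])
      (use assms in \<open>simp add: computable_pred_def, intro recfn_npair recfn_proj, auto\<close>)
  then obtain p where "\<forall>xs. length xs = 2 \<longrightarrow> eval p xs (if (xs ! 0, xs ! 1) \<in> R then 1 else 0)"
    unfolding recfn_def by auto
  then have "eval p [x, y] (if (x, y) \<in> R then 1 else 0)" for x y
    by (drule_tac spec[of _ "[x, y]"]) simp
  then show ?thesis unfolding computable_rel_def by blast
qed

lemma computable_pred_in_rel:
  assumes "computable_rel R" and "computable_fun a" and "computable_fun b"
  shows "computable_pred (\<lambda>x. (a x, b x) \<in> R)"
proof -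
  obtain p where p: "\<forall>x y. eval p [x, y] (if (x, y) \<in> R then 1 else 0)"
    using assms(1) unfolding computable_rel_def by blast
  have "recfn 2 (\<lambda>xs. if (xs ! 0, xs ! 1) \<in> R then 1 else 0)"
    unfolding recfn_def using p by (metis length_2_iff nth_Cons_0 nth_Cons_Suc One_nat_def)
  then have "recfn 1 (\<lambda>xs. if (a (hd xs), b (hd xs)) \<in> R then 1 else 0)"
    by (rule recfn_op2[where h = "\<lambda>u v. if (u, v) \<in> R then 1 else 0"])
      (use assms(2,3) in \<open>simp_all add: computable_fun_iff_recfn\<close>)
  then show ?thesis unfolding computable_pred_def computable_fun_iff_recfn .
qed

lemma computable_pred_in_set: "computable_set U \<Longrightarrow> computable_fun a \<Longrightarrow> computable_pred (\<lambda>x. a x \<in> U)"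
  unfolding computable_set_def computable_pred_def
  using computable_fun_comp[of "\<lambda>x. if x \<in> U then 1 else 0" a] by (simp add: computable_fun_def)

lemma computable_set_of_pred: "computable_pred (\<lambda>x. x \<in> U) \<Longrightarrow> computable_set U"
  unfolding computable_set_def computable_pred_def computable_fun_def by simp

lemma card_Least:
  assumes "P v" and "v \<le> x"
  shows "card {z. z < x \<and> \<not> (\<exists>w<Suc z. P w)} = (LEAST w. P w)"
proof -
  let ?m = "LEAST w. P w"
  have m: "P ?m" "?m \<le> v" using assms(1) by (auto intro: LeastI Least_le)
  have "{z. z < x \<and> \<not> (\<exists>w<Suc z. P w)} = {z. z < ?m}"
  proof (intro set_eqI iffI)
    fix z assume "z \<in> {z. z < x \<and> \<not> (\<exists>w<Suc z. P w)}"
    then have "\<not> ?m < Suc z" using m(1) by blast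
    then show "z \<in> {z. z < ?m}" by simp
  next
    fix z assume "z \<in> {z. z < ?m}"
    then have "z < ?m" by simp
    moreover have "\<not> P w" if "w < Suc z" for w using that \<open>z < ?m\<close> not_less_Least[of w P] by simp
    ultimately show "z \<in> {z. z < x \<and> \<not> (\<exists>w<Suc z. P w)}" using m(2) assms(2) by auto
  qed
  then show ?thesis by simp
qed

definition rank :: "nat set \<Rightarrow> nat \<Rightarrow> nat" where
  "rank X x = card {z. z < x \<and> z \<in> X}"

lemma rank_enumerate:
  assumes "infinite X"
  shows "rank X (enumerate X n) = n"
proof -
  have "{z. z < enumerate X n \<and> z \<in> X} = enumerate X ` {..<n}"
  proof (intro set_eqI iffI)
    fix z assume z: "z \<in> {z. z < enumerate X n \<and> z \<in> X}"
    then obtain k where "enumerate X k = z" using enumerate_Ex[OF assms] by blast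
    moreover from this have "k < n" using z assms by auto
    ultimately show "z \<in> enumerate X ` {..<n}" by auto
  qed (use assms in \<open>auto intro: enumerate_in_set\<close>)
  moreover have "inj_on (enumerate X) {..<n}"
    using inj_enumerate[OF assms] by (rule inj_on_subset) simp
  ultimately show ?thesis unfolding rank_def by (simp add: card_image)
qed

lemma bij_betw_rank:
  assumes "infinite X"
  shows "bij_betw (rank X) X UNIV"
proof -
  have "inj_on (rank X) X"
  proof
    fix x y assume "x \<in> X" "y \<in> X" "rank X x = rank X y"
    then obtain a b where "x = enumerate X a" "y = enumerate X b" using enumerate_Ex[OF assms] by metis
    then show "x = y" using \<open>rank X x = rank X y\<close> rank_enumerate[OF assms] by simp
  qed
  moreover have "n \<in> rank X ` X" for n
    using rank_enumerate[OF assms, of n] enumerate_in_set[OF assms, of n] by (metis image_eqI)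
  ultimately show ?thesis unfolding bij_betw_def by auto
qed

section \<open>Infinitely many infinite classes\<close>

text \<open>The least element of the class of x, written as a bounded count so that it is
  visibly computable from E.\<close>

definition class_min :: "nat rel \<Rightarrow> nat \<Rightarrow> nat" where
  "class_min E x = card {z. z < x \<and> \<not> (\<exists>w<Suc z. (w, x) \<in> E)}"

lemma class_min_eq_Least:
  assumes "equiv U E" and "x \<in> U"
  shows "class_min E x = (LEAST w. (w, x) \<in> E)"
proof -
  have "(x, x) \<in> E" using assms unfolding equiv_def refl_on_def by blast
  then show ?thesis unfolding class_min_def by (rule card_Least) simp
qed

lemma class_min_in_class:
  assumes "equiv U E" and "x \<in> U"
  shows "(class_min E x, x) \<in> E"
proof -
  have "(x, x) \<in> E" using assms unfolding equiv_def refl_on_def by blast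
  then show ?thesis unfolding class_min_eq_Least[OF assms] by (rule LeastI)
qed

lemma class_min_eq_iff:
  assumes "equiv U E" and "x \<in> U" and "y \<in> U"
  shows "class_min E x = class_min E y \<longleftrightarrow> (x, y) \<in> E"
proof
  assume "class_min E x = class_min E y"
  then have "E `` {x} = E `` {y}"
    using equiv_class_eq[OF assms(1) class_min_in_class[OF assms(1,2)]]
      equiv_class_eq[OF assms(1) class_min_in_class[OF assms(1,3)]] by simp
  then show "(x, y) \<in> E" using eq_equiv_class_iff[OF assms] by blast
next
  assume "(x, y) \<in> E"
  then have "E `` {x} = E `` {y}" by (rule equiv_class_eq[OF assms(1)])
  then have "(\<lambda>w. (w, x) \<in> E) = (\<lambda>w. (w, y) \<in> E)"
    using assms by (auto simp: equiv_class_eq_iff)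
  then show "class_min E x = class_min E y"
    using class_min_eq_Least[OF assms(1,2)] class_min_eq_Least[OF assms(1,3)] by simp
qed

lemma class_min_in_domain:
  assumes "equiv U E" and "x \<in> U"
  shows "class_min E x \<in> U"
  using class_min_in_class[OF assms] assms(1) unfolding equiv_def refl_on_def by blast

lemma class_min_class_min:
  assumes "equiv U E" and "x \<in> U"
  shows "class_min E (class_min E x) = class_min E x"
  using class_min_eq_iff[OF assms(1) class_min_in_domain[OF assms] assms(2)] class_min_in_class[OF assms]
  by simp

definition omega_rel :: "nat rel" where
  "omega_rel = {(x, y). nfst x = nfst y}"

definition omega_eqs :: eqstr where
  "omega_eqs = (UNIV, omega_rel)"

definition canonical_index :: "nat set \<Rightarrow> nat rel \<Rightarrow> nat \<Rightarrow> nat" where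
  "canonical_index U E x = npair (rank {m \<in> U. class_min E m = m} (class_min E x)) (rank (E `` {x}) x)"

lemma computable_fun_canonical_index:
  assumes U: "computable_set U" and E: "computable_rel E"
  shows "computable_fun (canonical_index U E)"
  unfolding canonical_index_def class_min_def rank_def mem_Collect_eq Image_singleton_iff
  by (intro computable_intros computable_pred_in_set[OF U] computable_pred_in_rel[OF E])

lemma infinite_class_mins:
  assumes "equiv U E" and "infinite (U // E)"
  shows "infinite {m \<in> U. class_min E m = m}"
proof
  assume "finite {m \<in> U. class_min E m = m}"
  moreover have "U // E \<subseteq> (\<lambda>m. E `` {m}) ` {m \<in> U. class_min E m = m}"
  proof
    fix C assume "C \<in> U // E"
    then obtain x where x: "x \<in> U" "C = E `` {x}" by (auto elim: quotientE)
    have "C = E `` {class_min E x}"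
      using x(2) equiv_class_eq[OF assms(1) class_min_in_class[OF assms(1) x(1)]] by simp
    moreover have "class_min E x \<in> {m \<in> U. class_min E m = m}"
      using class_min_in_domain[OF assms(1) x(1)] class_min_class_min[OF assms(1) x(1)] by simp
    ultimately show "C \<in> (\<lambda>m. E `` {m}) ` {m \<in> U. class_min E m = m}" by (rule image_eqI)
  qed
  ultimately show False using assms(2) finite_subset by blast
qed

lemma isomorphism_canonical_index:
  assumes equiv: "equiv U E" and classes: "\<forall>x\<in>U. infinite (E `` {x})" and "infinite (U // E)"
  shows "isomorphism (canonical_index U E) (U, E) omega_eqs"
proof -
  let ?M = "{m \<in> U. class_min E m = m}"
  have bij_M: "bij_betw (rank ?M) ?M UNIV"
    by (rule bij_betw_rank[OF infinite_class_mins[OF equiv assms(3)]])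
  have bij_class: "bij_betw (rank (E `` {x})) (E `` {x}) UNIV" if "x \<in> U" for x
    using bij_betw_rank classes that by blast
  have min_M: "class_min E x \<in> ?M" if "x \<in> U" for x
    using class_min_in_domain[OF equiv that] class_min_class_min[OF equiv that] by simp
  have class_eq: "(x, y) \<in> E \<Longrightarrow> E `` {x} = E `` {y}" for x y by (rule equiv_class_eq[OF equiv])
  have self: "x \<in> U \<Longrightarrow> x \<in> E `` {x}" for x using equiv unfolding equiv_def refl_on_def by blast
  have rel: "(x, y) \<in> E \<longleftrightarrow> nfst (canonical_index U E x) = nfst (canonical_index U E y)"
    if "x \<in> U" "y \<in> U" for x y
  proof -
    have "(x, y) \<in> E \<longleftrightarrow> class_min E x = class_min E y" by (rule class_min_eq_iff[OF equiv that, symmetric])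
    also have "\<dots> \<longleftrightarrow> rank ?M (class_min E x) = rank ?M (class_min E y)"
      using inj_on_eq_iff[OF bij_betw_imp_inj_on[OF bij_M] min_M[OF that(1)] min_M[OF that(2)]] by simp
    finally show ?thesis unfolding canonical_index_def by simp
  qed
  have "inj_on (canonical_index U E) U"
  proof
    fix x y assume xy: "x \<in> U" "y \<in> U" "canonical_index U E x = canonical_index U E y"
    then have "(x, y) \<in> E" using rel by simp
    then have "y \<in> E `` {x}" and "rank (E `` {x}) x = rank (E `` {x}) y"
      using xy(3) class_eq[of x y] self[OF xy(2)] unfolding canonical_index_def by simp_all
    then show "x = y"
      using inj_on_eq_iff[OF bij_betw_imp_inj_on[OF bij_class[OF xy(1)]] self[OF xy(1)]] by blast
  qed
  moreover have "z \<in> canonical_index U E ` U" for z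
  proof -
    have "nfst z \<in> rank ?M ` ?M" using bij_M by (simp add: bij_betw_def)
    then obtain m where m: "m \<in> ?M" "nfst z = rank ?M m" by (rule imageE)
    then have mU: "m \<in> U" by simp
    have "nsnd z \<in> rank (E `` {m}) ` (E `` {m})" using bij_class[OF mU] by (simp add: bij_betw_def)
    then obtain x where x: "x \<in> E `` {m}" "nsnd z = rank (E `` {m}) x" by (rule imageE)
    then have mx: "(m, x) \<in> E" by simp
    then have xU: "x \<in> U" using equiv unfolding equiv_def refl_on_def by blast
    have "class_min E x = m"
      using class_min_eq_iff[OF equiv mU xU] mx m(1) by simp
    then have "canonical_index U E x = z"
      unfolding canonical_index_def class_eq[OF mx, symmetric] by (simp add: m(2)[symmetric] x(2)[symmetric])
    then show ?thesis using xU by blast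
  qed
  ultimately have "bij_betw (canonical_index U E) U UNIV" unfolding bij_betw_def by blast
  with rel show ?thesis unfolding isomorphism_def omega_eqs_def omega_rel_def by simp
qed

lemma computable_omega_eqs: "computable_eqs omega_eqs"
  unfolding computable_eqs_def eq_structure_def omega_eqs_def fst_conv snd_conv
proof (intro conjI)
  show "equiv UNIV omega_rel"
    by (auto simp: omega_rel_def equiv_def refl_on_def sym_def trans_def)
  show "computable_set (UNIV :: nat set)"
    by (rule computable_set_of_pred) (simp add: computable_pred_const)
  show "computable_rel omega_rel"
    by (rule computable_rel_of_pred) (simp add: omega_rel_def, intro computable_intros)
qed

lemma isomorphic_omega_eqs_classes:
  assumes iso: "isomorphism h (U, E) omega_eqs"
  shows "\<forall>x\<in>U. infinite (E `` {x})" and "infinite (U // E)"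
proof -
  have h: "bij_betw h U UNIV" and hE: "\<And>x y. x \<in> U \<Longrightarrow> y \<in> U \<Longrightarrow> (x, y) \<in> E \<longleftrightarrow> nfst (h x) = nfst (h y)"
    using iso unfolding isomorphism_def omega_eqs_def omega_rel_def by auto
  define g where "g = inv_into U h"
  have g: "g n \<in> U" "h (g n) = n" for n
    using h unfolding g_def bij_betw_def by (auto intro: inv_into_into f_inv_into_f)
  show "\<forall>x\<in>U. infinite (E `` {x})"
  proof
    fix x assume "x \<in> U"
    have "inj (\<lambda>k. g (npair (nfst (h x)) k))" by (rule injI) (metis g(2) npair_eq_iff)
    moreover have "range (\<lambda>k. g (npair (nfst (h x)) k)) \<subseteq> E `` {x}"
      using g hE \<open>x \<in> U\<close> by auto
    ultimately show "infinite (E `` {x})" using range_inj_infinite infinite_super by blast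
  qed
  have "inj (\<lambda>i. E `` {g (npair i 0)})"
  proof (rule injI)
    fix i j assume "E `` {g (npair i 0)} = E `` {g (npair j 0)}"
    moreover have "g (npair j 0) \<in> E `` {g (npair j 0)}" using hE g(1) by simp
    ultimately have "(g (npair i 0), g (npair j 0)) \<in> E" by (metis Image_singleton_iff)
    then show "i = j" using hE g by simp
  qed
  moreover have "range (\<lambda>i. E `` {g (npair i 0)}) \<subseteq> U // E"
    using g(1) by (auto intro: quotientI)
  ultimately show "infinite (U // E)" using range_inj_infinite infinite_super by blast
qed

lemma computably_categorical_omega_eqs: "computably_categorical omega_eqs"
  unfolding computably_categorical_def
proof (intro allI impI)
  fix B assume B: "computable_eqs B \<and> isomorphic B omega_eqs"
  obtain U E where UE: "B = (U, E)" by (cases B)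
  obtain h where "isomorphism h (U, E) omega_eqs" using B UE unfolding isomorphic_def by blast
  note classes = isomorphic_omega_eqs_classes[OF this]
  have "equiv U E" "computable_set U" "computable_rel E"
    using B UE unfolding computable_eqs_def eq_structure_def by auto
  with classes have "computable_fun (canonical_index U E) \<and> isomorphism (canonical_index U E) (U, E) omega_eqs"
    using computable_fun_canonical_index isomorphism_canonical_index by blast
  then show "\<exists>f. computable_fun f \<and> isomorphism f B omega_eqs" using UE by blast
qed

section \<open>A bi-embeddable structure without computable embeddings\<close>

definition converged :: "nat \<Rightarrow> nat \<Rightarrow> bool" where
  "converged e t \<longleftrightarrow> (\<forall>j<Suc (2 * e). \<exists>y<t. eval_within e (npair j 0) t y)"

definition first_converged :: "nat \<Rightarrow> nat \<Rightarrow> bool" where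
  "first_converged e t \<longleftrightarrow> converged e t \<and> (\<forall>t'<t. \<not> converged e t')"

text \<open>stage_value e j t is the least y with eval_within e (npair j 0) t y, written as a
  bounded count.\<close>

definition stage_value :: "nat \<Rightarrow> nat \<Rightarrow> nat \<Rightarrow> nat" where
  "stage_value e j t = card {y. y < t \<and> \<not> (\<exists>w<Suc y. eval_within e (npair j 0) t w)}"

definition kills :: "nat \<Rightarrow> nat \<Rightarrow> nat \<Rightarrow> bool" where
  "kills e t n \<longleftrightarrow>
    (\<exists>j<Suc (2 * e). nfst (stage_value e j t) = n \<and> 2 * e \<le> n \<and> (\<forall>i<j. nfst (stage_value e i t) < 2 * e))"

definition killed :: "nat \<Rightarrow> nat \<Rightarrow> bool" where
  "killed n s \<longleftrightarrow> (\<exists>e<s. \<exists>t<Suc s. first_converged e t \<and> kills e t n)"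

definition diag_universe :: "nat set" where
  "diag_universe = {z. \<not> killed (nfst z) (nsnd z)}"

definition diag_rel :: "nat rel" where
  "diag_rel = {(x, y). x \<in> diag_universe \<and> y \<in> diag_universe \<and> nfst x = nfst y}"

definition diag_eqs :: eqstr where
  "diag_eqs = (diag_universe, diag_rel)"

lemma computable_pred_diag_universe: "computable_pred (\<lambda>z. z \<in> diag_universe)"
  unfolding diag_universe_def killed_def first_converged_def kills_def stage_value_def converged_def mem_Collect_eq
  by (intro computable_intros computable_pred_eval_within)

lemma computable_diag_eqs: "computable_eqs diag_eqs"
  unfolding computable_eqs_def eq_structure_def diag_eqs_def fst_conv snd_conv
proof (intro conjI)
  show "equiv diag_universe diag_rel"
    unfolding equiv_def refl_on_def sym_def trans_def diag_rel_def by auto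
  show "computable_set diag_universe" by (rule computable_set_of_pred[OF computable_pred_diag_universe])
  have "computable_pred (\<lambda>z. nfst z \<in> diag_universe \<and> nsnd z \<in> diag_universe \<and> nfst (nfst z) = nfst (nsnd z))"
    by (intro computable_intros computable_pred_comp[OF computable_pred_diag_universe])
  then show "computable_rel diag_rel" unfolding diag_rel_def by (intro computable_rel_of_pred) simp
qed

lemma killed_mono: "killed n s \<Longrightarrow> s \<le> s' \<Longrightarrow> killed n s'"
  unfolding killed_def by (meson le_imp_less_Suc less_le_trans not_less_eq_eq)

lemma first_converged_unique: "first_converged e t \<Longrightarrow> first_converged e t' \<Longrightarrow> t = t'"
  unfolding first_converged_def by (meson linorder_neqE_nat)

lemma kills_unique: "kills e t n \<Longrightarrow> kills e t n' \<Longrightarrow> n = n'"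
  unfolding kills_def by (metis linorder_neqE_nat not_le)

lemma kills_ge: "kills e t n \<Longrightarrow> 2 * e \<le> n"
  unfolding kills_def by auto

definition survivors :: "nat set" where
  "survivors = {n. \<forall>s. \<not> killed n s}"

text \<open>Each e kills at most one class, and only one with index at least 2e; so the M + 2
  classes M, ..., 2M + 1 cannot all be killed, as their killers would be distinct and at most M.\<close>

lemma infinite_survivors: "infinite survivors"
proof
  assume "finite survivors"
  then obtain M where M: "\<forall>n\<in>survivors. n < M" using finite_nat_set_iff_bounded by blast
  define killer where "killer n = (SOME e. \<exists>t. first_converged e t \<and> kills e t n)" for n
  have killer: "\<exists>t. first_converged (killer n) t \<and> kills (killer n) t n" if "M \<le> n" for n
  proof -
    have "n \<notin> survivors" using M that by auto
    then have "\<exists>e t. first_converged e t \<and> kills e t n" unfolding survivors_def killed_def by blast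
    then show ?thesis unfolding killer_def by (rule someI_ex)
  qed
  have "inj_on killer {M..<2 * Suc M}"
  proof
    fix a b assume "a \<in> {M..<2 * Suc M}" "b \<in> {M..<2 * Suc M}" "killer a = killer b"
    then obtain ta tb where "first_converged (killer a) ta" "kills (killer a) ta a"
      "first_converged (killer a) tb" "kills (killer a) tb b"
      using killer by (metis atLeastLessThan_iff)
    then show "a = b" using first_converged_unique kills_unique by blast
  qed
  moreover have "killer ` {M..<2 * Suc M} \<subseteq> {..<Suc M}"
  proof
    fix e assume "e \<in> killer ` {M..<2 * Suc M}"
    then obtain n where "n \<in> {M..<2 * Suc M}" "e = killer n" by auto
    moreover from this obtain t where "kills e t n" using killer by auto
    ultimately show "e \<in> {..<Suc M}" using kills_ge by fastforce
  qed
  ultimately have "card {M..<2 * Suc M} \<le> card {..<Suc M}"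
    by (meson card_inj_on_le finite_lessThan)
  then show False by simp
qed

lemma embedding_diag_omega: "embedding id diag_eqs omega_eqs"
  unfolding embedding_def diag_eqs_def omega_eqs_def omega_rel_def diag_rel_def by auto

lemma embedding_omega_diag: "embedding (\<lambda>z. npair (enumerate survivors (nfst z)) (nsnd z)) omega_eqs diag_eqs"
proof -
  let ?g = "\<lambda>z. npair (enumerate survivors (nfst z)) (nsnd z)"
  have inj: "inj (enumerate survivors)" by (rule inj_enumerate[OF infinite_survivors])
  have g_in: "?g z \<in> diag_universe" for z
    using enumerate_in_set[OF infinite_survivors] unfolding survivors_def diag_universe_def by simp
  have "inj ?g"
  proof (rule injI)
    fix x y assume "?g x = ?g y"
    then have "nfst x = nfst y" "nsnd x = nsnd y" using inj by (auto dest: injD)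
    then show "x = y" by (metis npair_nfst_nsnd)
  qed
  moreover have "(x, y) \<in> omega_rel \<longleftrightarrow> (?g x, ?g y) \<in> diag_rel" for x y
    using g_in inj unfolding omega_rel_def diag_rel_def by (auto dest: injD)
  ultimately show ?thesis
    unfolding embedding_def omega_eqs_def diag_eqs_def using g_in by auto
qed

lemma bi_embeddable_diag_omega: "bi_embeddable diag_eqs omega_eqs"
  unfolding bi_embeddable_def using embedding_diag_omega embedding_omega_diag by blast

lemma first_converged_stage_value:
  assumes p: "\<And>x. eval p [x] (g x)"
  defines "e \<equiv> recf_code p"
  shows "\<exists>t. first_converged e t \<and> (\<forall>j<Suc (2 * e). stage_value e j t = g (npair j 0))"
proof -
  have eval_within_eq: "w = g x" if "eval_within e x t w" for x t w
  proof -
    from that have "eval p [x] w" unfolding e_def by (rule eval_within_sound)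
    then show ?thesis using p by (rule eval_det)
  qed
  have "eventually (\<lambda>t. \<forall>j\<in>{..<Suc (2 * e)}. eval_within e (npair j 0) t (g (npair j 0))) sequentially"
    unfolding e_def using eval_within_complete p by (intro eventually_ball_finite) auto
  then obtain T where T: "\<And>j. j < Suc (2 * e) \<Longrightarrow> eval_within e (npair j 0) T (g (npair j 0))"
    unfolding eventually_sequentially by auto
  have "converged e T" unfolding converged_def
  proof (intro allI impI)
    fix j assume "j < Suc (2 * e)"
    then have "eval_within e (npair j 0) T (g (npair j 0))" by (rule T)
    then show "\<exists>y<T. eval_within e (npair j 0) T y" by (meson eval_within_less)
  qed
  define t where "t = (LEAST t. converged e t)"
  have conv: "converged e t" unfolding t_def using \<open>converged e T\<close> by (rule LeastI)
  have "first_converged e t" unfolding first_converged_def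
  proof (intro conjI allI impI)
    fix t' assume "t' < t"
    then show "\<not> converged e t'" unfolding t_def by (rule not_less_Least)
  qed (rule conv)
  moreover have "stage_value e j t = g (npair j 0)" if "j < Suc (2 * e)" for j
  proof -
    have "\<exists>y<t. eval_within e (npair j 0) t y" using conv that unfolding converged_def by simp
    then obtain y where y: "y < t" "eval_within e (npair j 0) t y" by blast
    have "stage_value e j t = (LEAST w. eval_within e (npair j 0) t w)"
      unfolding stage_value_def using y by (intro card_Least) auto
    also have "\<dots> = g (npair j 0)"
    proof (rule Least_equality)
      show "eval_within e (npair j 0) t (g (npair j 0))" using y(2) eval_within_eq[OF y(2)] by simp
    qed (drule eval_within_eq, simp)
    finally show ?thesis .
  qed
  ultimately show ?thesis by blast
qed

lemma embedding_omega_diag_class_iff: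
  assumes "embedding g omega_eqs diag_eqs"
  shows "nfst (g x) = nfst (g y) \<longleftrightarrow> nfst x = nfst y"
proof -
  have "(x, y) \<in> omega_rel \<longleftrightarrow> (g x, g y) \<in> diag_rel" and "g x \<in> diag_universe" "g y \<in> diag_universe"
    using assms unfolding embedding_def omega_eqs_def diag_eqs_def by auto
  then show ?thesis unfolding omega_rel_def diag_rel_def by simp
qed

lemma kills_image_class:
  assumes emb: "embedding g omega_eqs diag_eqs"
    and stage_values: "\<And>j. j < Suc (2 * e) \<Longrightarrow> stage_value e j t = g (npair j 0)"
  shows "\<exists>j. kills e t (nfst (g (npair j 0)))"
proof -
  let ?cls = "\<lambda>j. nfst (g (npair j 0))"
  have "\<exists>j<Suc (2 * e). 2 * e \<le> ?cls j"
  proof (rule ccontr)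
    assume "\<not> (\<exists>j<Suc (2 * e). 2 * e \<le> ?cls j)"
    then have "?cls ` {..<Suc (2 * e)} \<subseteq> {..<2 * e}" by auto
    moreover have "inj_on ?cls {..<Suc (2 * e)}"
      by (rule inj_onI) (simp add: embedding_omega_diag_class_iff[OF emb])
    ultimately have "card {..<Suc (2 * e)} \<le> card {..<2 * e}" by (intro card_inj_on_le) simp_all
    then show False by simp
  qed
  then obtain j0 where j0: "j0 < Suc (2 * e)" "2 * e \<le> ?cls j0" by blast
  define j where "j = (LEAST j. 2 * e \<le> ?cls j)"
  have "2 * e \<le> ?cls j" unfolding j_def using j0(2) by (rule LeastI)
  moreover have "j \<le> j0" unfolding j_def using j0(2) by (rule Least_le)
  moreover have "?cls i < 2 * e" if "i < j" for i
    using not_less_Least[of i "\<lambda>j. 2 * e \<le> ?cls j"] that unfolding j_def by simp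
  ultimately have "kills e t (?cls j)"
    unfolding kills_def using j0(1) stage_values by (intro exI[of _ j]) simp
  then show ?thesis by blast
qed

lemma no_computable_embedding_omega_diag:
  assumes "computable_fun g"
  shows "\<not> embedding g omega_eqs diag_eqs"
proof
  assume emb: "embedding g omega_eqs diag_eqs"
  obtain p where p: "\<And>x. eval p [x] (g x)" using assms unfolding computable_fun_def by blast
  obtain t where t: "first_converged (recf_code p) t"
    and stage_values: "\<forall>j<Suc (2 * recf_code p). stage_value (recf_code p) j t = g (npair j 0)"
    using first_converged_stage_value[OF p] by blast
  obtain j where "kills (recf_code p) t (nfst (g (npair j 0)))"
    using kills_image_class[OF emb] stage_values by blast
  moreover have "recf_code p < Suc (recf_code p) + t" and "t < Suc (Suc (recf_code p) + t)" by simp_all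
  ultimately have killed: "killed (nfst (g (npair j 0))) (Suc (recf_code p) + t)"
    unfolding killed_def using t by blast
  have g_in: "g x \<in> diag_universe" for x
    using emb unfolding embedding_def omega_eqs_def diag_eqs_def by auto
  have g_inj: "inj g" using emb unfolding embedding_def omega_eqs_def by simp
  let ?S = "npair (nfst (g (npair j 0))) ` {..<Suc (recf_code p) + t}"
  have "g (npair j k) \<in> ?S" for k
  proof -
    have same_class: "nfst (g (npair j k)) = nfst (g (npair j 0))"
      by (simp add: embedding_omega_diag_class_iff[OF emb])
    with g_in[of "npair j k"] have "\<not> killed (nfst (g (npair j 0))) (nsnd (g (npair j k)))"
      unfolding diag_universe_def by simp
    then have "nsnd (g (npair j k)) < Suc (recf_code p) + t"
      using killed_mono[OF killed] by (meson not_less)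
    moreover have "g (npair j k) = npair (nfst (g (npair j 0))) (nsnd (g (npair j k)))"
      using same_class npair_nfst_nsnd by metis
    ultimately show ?thesis by (intro image_eqI[where x = "nsnd (g (npair j k))"]) simp_all
  qed
  then have "range (\<lambda>k. g (npair j k)) \<subseteq> ?S" by blast
  moreover have "inj (\<lambda>k. g (npair j k))"
  proof (rule injI)
    fix k k' assume "g (npair j k) = g (npair j k')"
    then have "npair j k = npair j k'" by (rule injD[OF g_inj])
    then show "k = k'" by simp
  qed
  then have "infinite (range (\<lambda>k. g (npair j k)))" by (rule range_inj_infinite)
  ultimately show False using finite_subset by blast
qed

theorem corollary2p8:
  shows "\<exists>\<A>. computable_eqs \<A> \<and> computably_categorical \<A> \<and>
           \<not> computably_bi_embeddably_categorical \<A>"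
proof (intro exI conjI)
  show "computable_eqs omega_eqs" by (rule computable_omega_eqs)
  show "computably_categorical omega_eqs" by (rule computably_categorical_omega_eqs)
  show "\<not> computably_bi_embeddably_categorical omega_eqs"
    unfolding computably_bi_embeddably_categorical_def
    using computable_diag_eqs bi_embeddable_diag_omega no_computable_embedding_omega_diag by blast
qed

end
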